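(* Consider $N$ nodes, of which nodes $1,\dots,N_1$ are Byzantine and nodes $N_1+1,\dots,N$ are honest. For each node $i$, let $M$ be a positive integer, $\sigma_i>0$, $\eta_i\ge 0$, and let $Y_i$ be a random variable such that $Y_i/\sigma_i^2$ has the central chi-square distribution with $M$ degrees of freedom under hypothesis $H_0$, and the non-central chi-square distribution with $M$ degrees of freedom and non-centrality parameter $\eta_i$ under hypothesis $H_1$. Each Byzantine node $i\in\{1,\dots,N_1\}$, with attack probability $P_i\in[0,1]$ and attack strength $\Delta_i$, reports $\tilde Y_i=Y_i+\Delta_i$ with probability $P_i$ and $\tilde Y_i=Y_i$ with probability $1-P_i$ under $H_0$, and $\tilde Y_i=Y_i-\Delta_i$ with probability $P_i$ and $\tilde Y_i=Y_i$ with probability $1-P_i$ under $H_1$ (the attack decision being independent of $Y_i$). Let $\tilde w_1,\dots,\tilde w_{N_1}>0$ be the weights of the Byzantine nodes and $w_{N_1+1},\dots,w_N>0$ those of the honest nodes, $\mathrm{sum}(w)=\sum_{i=1}^{N_1}\tilde w_i+\sum_{i=N_1+1}^N w_i$, and consider the global test statistic $$\Lambda=\frac{\sum_{i=1}^{N_1}\tilde w_i\tilde Y_i+\sum_{i=N_1+1}^N w_iY_i}{\mathrm{sum}(w)}.$$ Then the deflection coefficient $\mathcal D(\Lambda)=(\mu_1-\mu_0)^2/\sigma_{(0)}^2$ equals zero if and only if $$\sum_{i=1}^{N_1}\tilde w_i\,(2P_i\Delta_i-\eta_i\sigma_i^2)=\sum_{i=N_1+1}^N w_i\,\eta_i\sigma_i^2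 .$$
   Context: $\mu_k=\mathbb E[\Lambda\mid H_k]$ for $k=0,1$ and $\sigma_{(0)}^2=\mathbb E[(\Lambda-\mu_0)^2\mid H_0]$. The random variables $Y_1,\dots,Y_N$ and the attack decisions of the Byzantine nodes are mutually independent. A network is called blind when its deflection coefficient is zero. *)

theory Defs
  imports "HOL-Probability.Probability"
begin

definition chi2_density :: "nat \<Rightarrow> real \<Rightarrow> real" where
  "chi2_density k x =
     (if x > 0 then x powr (real k / 2 - 1) * exp (- x / 2) / (2 powr (real k / 2) * Gamma (real k / 2))
      else 0)"

definition ncchi2_density :: "nat \<Rightarrow> real \<Rightarrow> real \<Rightarrow> real" where
  "ncchi2_density k eta x =
     (\<Sum>j. exp (- eta / 2) * (eta / 2) ^ j / fact j * chi2_density (k + 2 * j) x)"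

text \<open>Deflection coefficient of a test statistic, given its version L0 under H0 (measure M0)
  and L1 under H1 (measure M1): (mu1 - mu0)^2 / sigma0^2.\<close>
definition deflection ::
  "'a measure \<Rightarrow> 'a measure \<Rightarrow> ('a \<Rightarrow> real) \<Rightarrow> ('a \<Rightarrow> real) \<Rightarrow> real" where
  "deflection M0 M1 L0 L1 =
     (let mu0 = (\<integral>\<omega>. L0 \<omega> \<partial>M0);
          mu1 = (\<integral>\<omega>. L1 \<omega> \<partial>M1);
          s0 = (\<integral>\<omega>. (L0 \<omega> - mu0)\<^sup>2 \<partial>M0)
      in (mu1 - mu0)\<^sup>2 / s0)"

end

theory Submission
  imports Defs
begin

text \<open>Under either hypothesis the global statistic is a fixed linear combination of the
  independent readings \<open>Y\<^sub>i\<close> and attack indicators \<open>1[B\<^sub>i]\<close>, only the sign of the attack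
  coefficients changing. Under H0 its variance is therefore the weighted sum of the variances of
  these terms, which is positive since a scaled chi-square reading has variance
  \<open>2 M \<sigma>\<^sub>i\<^sup>4 > 0\<close>; so the deflection vanishes exactly when \<open>\<mu>\<^sub>1 = \<mu>\<^sub>0\<close>. The means follow from
  \<open>E[\<chi>\<^sup>2\<^sub>M] = M\<close>, \<open>E[\<chi>'\<^sup>2\<^sub>M(\<eta>)] = M + \<eta>\<close> (via the Poisson mixture defining the non-central density)
  and \<open>E[1[B\<^sub>i]] = P\<^sub>i\<close>, which give
  \<open>sum(w) (\<mu>\<^sub>1 - \<mu>\<^sub>0) = \<Sum>\<^sub>i w\<^sub>i \<eta>\<^sub>i \<sigma>\<^sub>i\<^sup>2 - 2 \<Sum>\<^sub>i\<^sub>\<le>\<^sub>N\<^sub>1 w\<^sub>i P\<^sub>i \<Delta>\<^sub>i\<close>.\<close>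

lemma chi2_density_nonneg: "0 \<le> chi2_density k x"
proof -
  have "0 \<le> Gamma (real k / 2)"
    by (cases "k = 0") (auto intro: less_imp_le)
  then show ?thesis
    by (auto simp: chi2_density_def intro!: divide_nonneg_nonneg)
qed

lemma borel_measurable_chi2_density [measurable]: "chi2_density k \<in> borel_measurable borel"
  unfolding chi2_density_def by measurable

lemma chi2_density_eq_0: "x \<le> 0 \<Longrightarrow> chi2_density k x = 0"
  by (simp add: chi2_density_def)

lemma chi2_density_mult_power_nonneg: "0 \<le> chi2_density k x * x ^ m"
  by (cases "x \<le> 0") (simp_all add: chi2_density_eq_0 chi2_density_nonneg)

text \<open>Substituting x = 2t turns the moment integral into Euler's integral for Gamma (k/2 + m).\<close>
lemma nn_integral_chi2_density_moment:
  assumes "0 < k"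
  shows "(\<integral>\<^sup>+x. ennreal (chi2_density k x * x ^ m) \<partial>lborel)
           = ennreal (2 ^ m * pochhammer (real k / 2) m)"
proof -
  define a where "a = real k / 2"
  have a: "0 < a" using assms by (simp add: a_def)
  have density_2t: "chi2_density k (2 * t) * (2 * t) ^ m
      = 2 ^ m / (2 * Gamma a) * (indicator {0..} t * t powr (a + real m - 1) / exp t)" for t :: real
  proof (cases "0 < t")
    case True
    have "chi2_density k (2 * t) * (2 * t) ^ m
        = (2 * t) powr (a - 1) * exp (- t) / (2 powr a * Gamma a) * (2 ^ m * t ^ m)"
      using True by (simp add: chi2_density_def a_def power_mult_distrib)
    also have "(2 * t) powr (a - 1) = 2 powr a / 2 * t powr (a - 1)"
      using True by (simp add: powr_mult powr_diff)
    also have "2 powr a / 2 * t powr (a - 1) * exp (- t) / (2 powr a * Gamma a) * (2 ^ m * t ^ m)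
        = 2 ^ m / (2 * Gamma a) * (t powr (a - 1) * t ^ m * exp (- t))"
      by (simp add: field_simps)
    also have "t powr (a - 1) * t ^ m = t powr (a + real m - 1)"
      using True by (simp add: powr_add powr_diff powr_realpow)
    finally show ?thesis
      using True by (simp add: exp_minus field_simps)
  qed (auto simp: chi2_density_eq_0 indicator_def)
  have "(\<integral>\<^sup>+x. ennreal (chi2_density k x * x ^ m) \<partial>lborel)
      = 2 * (\<integral>\<^sup>+t. ennreal (chi2_density k (2 * t) * (2 * t) ^ m) \<partial>lborel)"
    using nn_integral_real_affine[where c=2 and t=0 and f="\<lambda>x. ennreal (chi2_density k x * x ^ m)"]
    by simp
  also have "\<dots> = 2 * (\<integral>\<^sup>+t. ennreal (2 ^ m / (2 * Gamma a))
                    * ennreal (indicator {0..} t * t powr (a + real m - 1) / exp t) \<partial>lborel)"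
    unfolding density_2t using a by (simp add: ennreal_mult'[symmetric])
  also have "\<dots> = 2 * (ennreal (2 ^ m / (2 * Gamma a)) * ennreal (Gamma (a + real m)))"
    using a by (subst nn_integral_cmult) (auto simp: Gamma_conv_nn_integral_real)
  also have "\<dots> = ennreal (2 ^ m * (Gamma (a + real m) / Gamma a))"
    using a by (simp add: ennreal_mult'[symmetric] field_simps flip: ennreal_numeral)
  also have "Gamma (a + real m) / Gamma a = pochhammer a m"
    using a by (simp add: pochhammer_Gamma nonpos_Ints_def)
  finally show ?thesis by (simp add: a_def)
qed

lemma
  assumes "0 < k"
  shows integrable_chi2_density_moment: "integrable lborel (\<lambda>x. chi2_density k x * x ^ m)"
    and lborel_integral_chi2_density_moment:
      "(\<integral>x. chi2_density k x * x ^ m \<partial>lborel) = 2 ^ m * pochhammer (real k / 2) m"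
proof -
  have "0 \<le> pochhammer (real k / 2) m"
    using assms by (intro pochhammer_nonneg) simp
  then show "integrable lborel (\<lambda>x. chi2_density k x * x ^ m)"
            "(\<integral>x. chi2_density k x * x ^ m \<partial>lborel) = 2 ^ m * pochhammer (real k / 2) m"
    using nn_integral_chi2_density_moment[OF assms]
    by (auto simp: chi2_density_mult_power_nonneg integral_eq_nn_integral
             intro!: integrableI_nn_integral_finite)
qed

lemma (in prob_space) chi2_distributed_moment:
  assumes D: "distributed M lborel X (\<lambda>x. ennreal (chi2_density k x))" and k: "0 < k"
  shows "integrable M (\<lambda>\<omega>. X \<omega> ^ m)" "expectation (\<lambda>\<omega>. X \<omega> ^ m) = 2 ^ m * pochhammer (real k / 2) m"
  using distributed_integrable[OF D, of "\<lambda>x. x ^ m"] distributed_integral[OF D, of "\<lambda>x. x ^ m"]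
    integrable_chi2_density_moment[OF k] lborel_integral_chi2_density_moment[OF k]
  by (simp_all add: chi2_density_nonneg)

lemma (in prob_space) scaled_chi2_distributed_moments:
  assumes D: "distributed M lborel (\<lambda>\<omega>. Y \<omega> / s\<^sup>2) (\<lambda>x. ennreal (chi2_density k x))"
    and s: "0 < s" and k: "0 < k"
  shows "integrable M Y" "expectation Y = s\<^sup>2 * real k"
    "integrable M (\<lambda>\<omega>. (Y \<omega>)\<^sup>2)" "variance Y = 2 * real k * s ^ 4"
proof -
  define X where "X \<omega> = Y \<omega> / s\<^sup>2" for \<omega>
  have Y: "Y = (\<lambda>\<omega>. s\<^sup>2 * X \<omega>)"
    using s by (auto simp: X_def)
  note m1 = chi2_distributed_moment[OF D[folded X_def] k, of 1]
  note m2 = chi2_distributed_moment[OF D[folded X_def] k, of 2]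
  show iY: "integrable M Y" and EY: "expectation Y = s\<^sup>2 * real k"
    using m1 unfolding Y by simp_all
  show iY2: "integrable M (\<lambda>\<omega>. (Y \<omega>)\<^sup>2)"
    using m2 unfolding Y by (simp add: power_mult_distrib)
  have "expectation (\<lambda>\<omega>. (X \<omega>)\<^sup>2) = real k * (real k + 2)"
    using m2 by (simp add: pochhammer_Suc numeral_2_eq_2 field_simps)
  then have "expectation (\<lambda>\<omega>. (Y \<omega>)\<^sup>2) = s ^ 4 * (real k * (real k + 2))"
    unfolding Y by (simp add: power_mult_distrib flip: power_mult)
  then show "variance Y = 2 * real k * s ^ 4"
    using variance_eq[OF iY iY2] EY by (simp add: power2_eq_square power4_eq_xxxx algebra_simps)
qed

definition poisson_weight :: "real \<Rightarrow> nat \<Rightarrow> real" where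
  "poisson_weight c j = exp (- c) * c ^ j / fact j"

lemma poisson_weight_nonneg: "0 \<le> c \<Longrightarrow> 0 \<le> poisson_weight c j"
  by (simp add: poisson_weight_def)

lemma sums_poisson_weight: "poisson_weight c sums 1"
proof -
  have "(\<lambda>j. exp (- c) * (c ^ j / fact j)) sums (exp (- c) * exp c)"
    using sums_mult[OF exp_converges[of c], of "exp (- c)"] by (simp add: divide_inverse mult.commute)
  then show ?thesis
    unfolding poisson_weight_def[abs_def] by (simp add: exp_minus divide_inverse mult.assoc)
qed

lemma sums_poisson_weight_mult_index: "(\<lambda>j. poisson_weight c j * real j) sums c"
proof -
  have "poisson_weight c (Suc j) * real (Suc j) = c * poisson_weight c j" for j
    by (simp add: poisson_weight_def field_simps del: of_nat_Suc)
  then have "(\<lambda>j. poisson_weight c (Suc j) * real (Suc j)) sums (c * 1)"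
    by (simp only: sums_mult[OF sums_poisson_weight])
  then show ?thesis
    using sums_Suc[of "\<lambda>j. poisson_weight c j * real j"] by (simp del: of_nat_Suc)
qed

lemma ncchi2_density_poisson_mixture:
  "ncchi2_density k eta x = (\<Sum>j. poisson_weight (eta / 2) j * chi2_density (k + 2 * j) x)"
  by (simp add: ncchi2_density_def poisson_weight_def)

lemma borel_measurable_ncchi2_density [measurable]: "ncchi2_density k eta \<in> borel_measurable borel"
  unfolding ncchi2_density_def by measurable

lemma ncchi2_density_eq_0: "x \<le> 0 \<Longrightarrow> ncchi2_density k eta x = 0"
  by (simp add: ncchi2_density_def chi2_density_eq_0)

lemma nn_integral_poisson_chi2_mixture_moment:
  assumes "0 < k" "0 \<le> c"
  shows "(\<integral>\<^sup>+x. (\<Sum>j. ennreal (poisson_weight c j * chi2_density (k + 2 * j) x * x ^ m)) \<partial>lborel)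
           = (\<Sum>j. ennreal (poisson_weight c j * (2 ^ m * pochhammer (real k / 2 + real j) m)))"
proof -
  have "(\<integral>\<^sup>+x. ennreal (poisson_weight c j * chi2_density (k + 2 * j) x * x ^ m) \<partial>lborel)
          = ennreal (poisson_weight c j * (2 ^ m * pochhammer (real k / 2 + real j) m))" for j
  proof -
    have "(\<integral>\<^sup>+x. ennreal (poisson_weight c j * chi2_density (k + 2 * j) x * x ^ m) \<partial>lborel)
        = ennreal (poisson_weight c j) * (\<integral>\<^sup>+x. ennreal (chi2_density (k + 2 * j) x * x ^ m) \<partial>lborel)"
      using assms(2)
      by (subst nn_integral_cmult[symmetric])
         (auto simp: ennreal_mult' poisson_weight_nonneg mult.assoc intro!: nn_integral_cong)
    also have "\<dots> = ennreal (poisson_weight c j * (2 ^ m * pochhammer (real k / 2 + real j) m))"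
      using assms by (simp add: nn_integral_chi2_density_moment ennreal_mult' poisson_weight_nonneg add_divide_distrib)
    finally show ?thesis .
  qed
  then show ?thesis
    by (subst nn_integral_suminf) auto
qed

lemma AE_ncchi2_density_sums:
  assumes "0 < k" "0 \<le> eta"
  shows "AE x in lborel.
           (\<lambda>j. poisson_weight (eta / 2) j * chi2_density (k + 2 * j) x) sums ncchi2_density k eta x"
proof -
  \<comment> \<open>The mixture has total mass 1, so its series converges almost everywhere.\<close>
  have "(\<integral>\<^sup>+x. (\<Sum>j. ennreal (poisson_weight (eta / 2) j * chi2_density (k + 2 * j) x)) \<partial>lborel) = 1"
    using nn_integral_poisson_chi2_mixture_moment[OF assms(1), of "eta / 2" 0] assms(2)
    by (simp add: suminf_ennreal_eq[OF poisson_weight_nonneg sums_poisson_weight])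
  then have "AE x in lborel. (\<Sum>j. ennreal (poisson_weight (eta / 2) j * chi2_density (k + 2 * j) x)) \<noteq> \<infinity>"
    by (intro nn_integral_noteq_infinite) auto
  then show ?thesis
  proof eventually_elim
    case (elim x)
    then have "summable (\<lambda>j. poisson_weight (eta / 2) j * chi2_density (k + 2 * j) x)"
      using assms(2) by (intro summable_suminf_not_top) (auto simp: poisson_weight_nonneg chi2_density_nonneg)
    then show ?case
      by (simp add: ncchi2_density_poisson_mixture summable_sums)
  qed
qed

lemma nn_integral_ncchi2_density_mult_id:
  assumes "0 < k" "0 \<le> eta"
  shows "(\<integral>\<^sup>+x. ennreal (ncchi2_density k eta x * x) \<partial>lborel) = ennreal (real k + eta)"
proof -
  let ?T = "\<lambda>j x. poisson_weight (eta / 2) j * chi2_density (k + 2 * j) x * x ^ 1"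
  have T_nonneg: "0 \<le> ?T j x" for j x
    using assms(2) chi2_density_mult_power_nonneg[of "k + 2 * j" x 1]
    by (simp add: mult.assoc poisson_weight_nonneg)
  have "AE x in lborel. ennreal (ncchi2_density k eta x * x) = (\<Sum>j. ennreal (?T j x))"
    using AE_ncchi2_density_sums[OF assms]
  proof eventually_elim
    case (elim x)
    then have "(\<lambda>j. ?T j x) sums (ncchi2_density k eta x * x)"
      by (simp add: sums_mult2)
    then have "(\<Sum>j. ennreal (?T j x)) = ennreal (ncchi2_density k eta x * x)"
      by (intro suminf_ennreal_eq T_nonneg)
    then show ?case
      by (rule sym)
  qed
  then have "(\<integral>\<^sup>+x. ennreal (ncchi2_density k eta x * x) \<partial>lborel)
      = (\<Sum>j. ennreal (poisson_weight (eta / 2) j * (2 ^ 1 * pochhammer (real k / 2 + real j) 1)))"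
    using nn_integral_poisson_chi2_mixture_moment[OF assms(1), of "eta / 2" 1] assms(2)
    by (simp add: nn_integral_cong_AE)
  also have "\<dots> = ennreal (real k + eta)"
  proof (rule suminf_ennreal_eq)
    show "0 \<le> poisson_weight (eta / 2) j * (2 ^ 1 * pochhammer (real k / 2 + real j) 1)" for j
      using assms(2) by (simp add: poisson_weight_nonneg)
    have "(\<lambda>j. real k * poisson_weight (eta / 2) j + 2 * (poisson_weight (eta / 2) j * real j))
        sums (real k * 1 + 2 * (eta / 2))"
      by (intro sums_add sums_mult sums_poisson_weight sums_poisson_weight_mult_index)
    then show "(\<lambda>j. poisson_weight (eta / 2) j * (2 ^ 1 * pochhammer (real k / 2 + real j) 1))
        sums (real k + eta)"
      by (simp add: algebra_simps)
  qed
  finally show ?thesis .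
qed

lemma (in prob_space) ncchi2_distributed_mean:
  assumes D: "distributed M lborel X (\<lambda>x. ennreal (ncchi2_density k eta x))"
    and k: "0 < k" and eta: "0 \<le> eta"
  shows "integrable M X" "expectation X = real k + eta"
proof -
  have AE_nonneg: "AE x in lborel. 0 \<le> ncchi2_density k eta x"
    using AE_ncchi2_density_sums[OF k eta]
  proof eventually_elim
    case (elim x)
    show ?case
      using eta by (intro sums_le[OF _ sums_zero elim]) (simp add: poisson_weight_nonneg chi2_density_nonneg)
  qed
  \<comment> \<open>The series defining the density may diverge on a null set, where its value is unspecified;
    its positive part defines the same distribution and is nonnegative everywhere.\<close>
  define f where "f x = max 0 (ncchi2_density k eta x)" for x
  have [measurable]: "f \<in> borel_measurable borel"
    unfolding f_def by measurable
  have f_nonneg: "0 \<le> f x * x" for x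
    by (cases "x \<le> 0") (simp_all add: f_def ncchi2_density_eq_0)
  have D': "distributed M lborel X (\<lambda>x. ennreal (f x))"
    using D by (simp add: f_def ennreal_max_0)
  have "(\<integral>\<^sup>+x. ennreal (f x * x) \<partial>lborel) = (\<integral>\<^sup>+x. ennreal (ncchi2_density k eta x * x) \<partial>lborel)"
    using AE_nonneg by (intro nn_integral_cong_AE) (erule eventually_mono, simp add: f_def)
  also have "\<dots> = ennreal (real k + eta)"
    by (rule nn_integral_ncchi2_density_mult_id[OF k eta])
  finally have nn_integral_f: "(\<integral>\<^sup>+x. ennreal (f x * x) \<partial>lborel) = ennreal (real k + eta)" .
  have "integrable lborel (\<lambda>x. f x * x)"
    by (rule integrableI_nn_integral_finite[OF _ _ nn_integral_f]) (simp_all add: f_nonneg)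
  moreover have "(\<integral>x. f x * x \<partial>lborel) = real k + eta"
    using k eta by (subst integral_eq_nn_integral) (simp_all add: f_nonneg nn_integral_f)
  ultimately show "integrable M X" "expectation X = real k + eta"
    using distributed_integrable[OF D', of "\<lambda>x. x"] distributed_integral[OF D', of "\<lambda>x. x"]
    by (simp_all add: f_def)
qed

lemma (in prob_space) scaled_ncchi2_distributed_mean:
  assumes "distributed M lborel (\<lambda>\<omega>. Y \<omega> / s\<^sup>2) (\<lambda>x. ennreal (ncchi2_density k eta x))"
    and "0 < s" "0 < k" "0 \<le> eta"
  shows "integrable M Y" "expectation Y = s\<^sup>2 * (real k + eta)"
proof -
  have "Y = (\<lambda>\<omega>. s\<^sup>2 * (Y \<omega> / s\<^sup>2))"
    using assms by auto
  then show "integrable M Y" "expectation Y = s\<^sup>2 * (real k + eta)"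
    using ncchi2_distributed_mean[OF assms(1,3,4)]
    by (metis integrable_mult_right, metis integral_mult_right_zero)
qed

lemma (in prob_space) indep_vars_centered_product:
  fixes V :: "'i \<Rightarrow> 'a \<Rightarrow> real"
  assumes ind: "indep_vars (\<lambda>_. borel) V I" and "i \<in> I" "j \<in> I" "i \<noteq> j"
    and int: "integrable M (V i)" "integrable M (V j)"
  shows "integrable M (\<lambda>\<omega>. (V i \<omega> - expectation (V i)) * (V j \<omega> - expectation (V j)))"
    "expectation (\<lambda>\<omega>. (V i \<omega> - expectation (V i)) * (V j \<omega> - expectation (V j))) = 0"
proof -
  define Z where "Z l \<omega> = V l \<omega> - expectation (V l)" for l \<omega>
  have "indep_vars (\<lambda>_. borel) Z {i, j}"
    unfolding Z_def using assms by (intro indep_vars_compose2[OF indep_vars_subset[OF ind]]) auto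
  moreover have Z_int: "integrable M (Z l)" if "l \<in> {i, j}" for l
    using that int by (auto simp: Z_def[abs_def])
  ultimately have "integrable M (\<lambda>\<omega>. \<Prod>l\<in>{i, j}. Z l \<omega>)"
      "expectation (\<lambda>\<omega>. \<Prod>l\<in>{i, j}. Z l \<omega>) = (\<Prod>l\<in>{i, j}. expectation (Z l))"
    by (auto intro!: indep_vars_integrable indep_vars_lebesgue_integral)
  moreover have "expectation (Z i) = 0"
    using int by (simp add: Z_def[abs_def] prob_space)
  ultimately show "integrable M (\<lambda>\<omega>. (V i \<omega> - expectation (V i)) * (V j \<omega> - expectation (V j)))"
      "expectation (\<lambda>\<omega>. (V i \<omega> - expectation (V i)) * (V j \<omega> - expectation (V j))) = 0"
    using \<open>i \<noteq> j\<close> by (simp_all add: Z_def)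
qed

lemma (in prob_space) variance_sum_indep:
  fixes V :: "'i \<Rightarrow> 'a \<Rightarrow> real"
  assumes "finite I" and ind: "indep_vars (\<lambda>_. borel) V I"
    and int: "\<And>j. j \<in> I \<Longrightarrow> integrable M (V j)"
    and int2: "\<And>j. j \<in> I \<Longrightarrow> integrable M (\<lambda>\<omega>. (V j \<omega>)\<^sup>2)"
  shows "variance (\<lambda>\<omega>. \<Sum>j\<in>I. c j * V j \<omega>) = (\<Sum>j\<in>I. (c j)\<^sup>2 * variance (V j))"
proof -
  define Z where "Z j \<omega> = V j \<omega> - expectation (V j)" for j \<omega>
  have covariance: "integrable M (\<lambda>\<omega>. Z i \<omega> * Z j \<omega>)
      \<and> expectation (\<lambda>\<omega>. Z i \<omega> * Z j \<omega>) = (if i = j then variance (V i) else 0)"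
    if "i \<in> I" "j \<in> I" for i j
  proof (cases "i = j")
    case True
    have "integrable M (\<lambda>\<omega>. (V i \<omega>)\<^sup>2 - 2 * expectation (V i) * V i \<omega> + (expectation (V i))\<^sup>2)"
      using int int2 that by auto
    then show ?thesis
      using True by (simp add: Z_def power2_eq_square algebra_simps)
  next
    case False
    then show ?thesis
      using indep_vars_centered_product[OF ind that False int[OF that(1)] int[OF that(2)]]
      by (simp add: Z_def)
  qed
  have "expectation (\<lambda>\<omega>. \<Sum>j\<in>I. c j * V j \<omega>) = (\<Sum>j\<in>I. c j * expectation (V j))"
    using int by (simp add: Bochner_Integration.integral_sum)
  then have "variance (\<lambda>\<omega>. \<Sum>j\<in>I. c j * V j \<omega>)
      = expectation (\<lambda>\<omega>. \<Sum>i\<in>I. \<Sum>j\<in>I. c i * c j * (Z i \<omega> * Z j \<omega>))"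
    by (simp add: Z_def power2_eq_square sum_product sum_subtractf[symmetric] right_diff_distrib algebra_simps)
  also have "\<dots> = (\<Sum>i\<in>I. \<Sum>j\<in>I. c i * c j * expectation (\<lambda>\<omega>. Z i \<omega> * Z j \<omega>))"
    using covariance by (simp add: Bochner_Integration.integral_sum)
  also have "\<dots> = (\<Sum>i\<in>I. \<Sum>j\<in>I. c i * c j * (if i = j then variance (V i) else 0))"
    using covariance by (intro sum.cong refl) simp
  also have "\<dots> = (\<Sum>j\<in>I. (c j)\<^sup>2 * variance (V j))"
    using \<open>finite I\<close> by (simp add: power2_eq_square if_distrib sum.delta cong: if_cong)
  finally show ?thesis .
qed

lemma (in prob_space) indicator_moments:
  assumes meas: "(\<lambda>\<omega>. if B \<omega> then 1 else 0 :: real) \<in> borel_measurable M"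
  shows "integrable M (\<lambda>\<omega>. if B \<omega> then 1 else 0 :: real)"
    "integrable M (\<lambda>\<omega>. (if B \<omega> then 1 else 0 :: real)\<^sup>2)"
    "expectation (\<lambda>\<omega>. if B \<omega> then 1 else 0 :: real) = prob {\<omega> \<in> space M. B \<omega>}"
proof -
  show int: "integrable M (\<lambda>\<omega>. if B \<omega> then 1 else 0 :: real)"
    using meas by (intro integrable_const_bound[where B=1]) auto
  moreover have "(\<lambda>\<omega>. (if B \<omega> then 1 else 0 :: real)\<^sup>2) = (\<lambda>\<omega>. if B \<omega> then 1 else 0)"
    by auto
  ultimately show "integrable M (\<lambda>\<omega>. (if B \<omega> then 1 else 0 :: real)\<^sup>2)"
    by simp
  have "{\<omega> \<in> space M. B \<omega>} = (\<lambda>\<omega>. if B \<omega> then 1 else 0 :: real) -` {1} \<inter> space M"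
    by (auto split: if_splits)
  then have "{\<omega> \<in> space M. B \<omega>} \<in> events"
    using measurable_sets[OF meas] by simp
  moreover have "expectation (\<lambda>\<omega>. if B \<omega> then 1 else 0 :: real)
      = expectation (indicator {\<omega> \<in> space M. B \<omega>})"
    by (intro Bochner_Integration.integral_cong) (auto simp: indicator_def)
  ultimately show "expectation (\<lambda>\<omega>. if B \<omega> then 1 else 0 :: real) = prob {\<omega> \<in> space M. B \<omega>}"
    by simp
qed

lemma deflection_eq_0_iff:
  assumes "0 < (\<integral>\<omega>. (L0 \<omega> - (\<integral>\<omega>. L0 \<omega> \<partial>M0))\<^sup>2 \<partial>M0)"
  shows "deflection M0 M1 L0 L1 = 0 \<longleftrightarrow> (\<integral>\<omega>. L1 \<omega> \<partial>M1) = (\<integral>\<omega>. L0 \<omega> \<partial>M0)"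
  using assms by (simp add: deflection_def Let_def)

lemma deflection_linear_statistic_eq_0_iff:
  fixes V :: "'i \<Rightarrow> 'a \<Rightarrow> real"
  assumes "prob_space M0" "finite I"
    and ind: "prob_space.indep_vars M0 (\<lambda>_. borel) V I"
    and int0: "\<And>j. j \<in> I \<Longrightarrow> integrable M0 (V j)"
    and int0_sq: "\<And>j. j \<in> I \<Longrightarrow> integrable M0 (\<lambda>\<omega>. (V j \<omega>)\<^sup>2)"
    and int1: "\<And>j. j \<in> I \<Longrightarrow> integrable M1 (V j)"
    and "k \<in> I" "c0 k \<noteq> 0" "0 < prob_space.variance M0 (V k)"
  shows "deflection M0 M1 (\<lambda>\<omega>. \<Sum>j\<in>I. c0 j * V j \<omega>) (\<lambda>\<omega>. \<Sum>j\<in>I. c1 j * V j \<omega>) = 0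
           \<longleftrightarrow> (\<Sum>j\<in>I. c1 j * (\<integral>\<omega>. V j \<omega> \<partial>M1)) = (\<Sum>j\<in>I. c0 j * (\<integral>\<omega>. V j \<omega> \<partial>M0))"
proof -
  interpret M0: prob_space M0 by fact
  have "0 < (c0 k)\<^sup>2 * M0.variance (V k)"
    using assms by simp
  also have "\<dots> \<le> (\<Sum>j\<in>I. (c0 j)\<^sup>2 * M0.variance (V j))"
    using assms by (intro member_le_sum) (auto intro!: M0.variance_positive)
  also have "\<dots> = M0.variance (\<lambda>\<omega>. \<Sum>j\<in>I. c0 j * V j \<omega>)"
    using assms by (intro M0.variance_sum_indep[symmetric])
  finally show ?thesis
    using int0 int1 by (simp add: deflection_eq_0_iff Bochner_Integration.integral_sum)
qed

lemma sum_Inl_Inr_image: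
  assumes "finite A" "finite B"
  shows "sum g (Inl ` A \<union> Inr ` B) = (\<Sum>i\<in>A. g (Inl i)) + (\<Sum>i\<in>B. g (Inr i))"
  using assms by (subst sum.union_disjoint) (auto simp: sum.reindex)

text \<open>As in the independence hypotheses of the theorem, \<open>Inl i\<close> indexes the reading of node \<open>i\<close>
  and \<open>Inr i\<close> the attack indicator of Byzantine node \<open>i\<close>; \<open>d = 1\<close> gives the statistic under H0
  and \<open>d = -1\<close> the one under H1.\<close>
lemma attacked_statistic_linear_combination:
  fixes Y R :: "nat \<Rightarrow> 'a \<Rightarrow> real"
  assumes "N1 \<le> N" and R: "\<And>i. R i \<omega> = Y i \<omega> + d * (if B i \<omega> then Delta i else 0)"
  shows "((\<Sum>i\<in>{1..N1}. w i * R i \<omega>) + (\<Sum>i\<in>{N1+1..N}. w i * Y i \<omega>)) / W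
         = (\<Sum>j\<in>Inl ` {1..N} \<union> Inr ` {1..N1}.
              (case j of Inl i \<Rightarrow> w i / W | Inr i \<Rightarrow> d * w i * Delta i / W)
              * (case j of Inl i \<Rightarrow> Y i | Inr i \<Rightarrow> (\<lambda>\<omega>. if B i \<omega> then 1 else 0)) \<omega>)"
proof -
  have "(\<Sum>i\<in>{1..N}. w i * Y i \<omega> / W)
      = (\<Sum>i\<in>{1..N1}. w i * Y i \<omega> / W) + (\<Sum>i\<in>{N1+1..N}. w i * Y i \<omega> / W)"
    using sum.ub_add_nat[of 1 N1 "\<lambda>i. w i * Y i \<omega> / W" "N - N1"] assms by simp
  moreover have "w i * R i \<omega> = w i * Y i \<omega> + d * w i * Delta i * (if B i \<omega> then 1 else 0)" for i
    by (simp add: R algebra_simps)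
  ultimately show ?thesis
    by (simp add: sum_Inl_Inr_image sum.distrib add_divide_distrib sum_divide_distrib)
qed

lemma deflection_attacked_statistic_eq_0_iff:
  fixes Y :: "nat \<Rightarrow> 'a \<Rightarrow> real" and B :: "nat \<Rightarrow> 'a \<Rightarrow> bool" and w Delta :: "nat \<Rightarrow> real"
  assumes "prob_space M0" "prob_space M1" "N1 \<le> N" "1 \<le> N"
    and w: "\<And>i. i \<in> {1..N} \<Longrightarrow> 0 < w i"
    and ind: "prob_space.indep_vars M0 (\<lambda>_. borel)
           (\<lambda>j. case j of Inl i \<Rightarrow> Y i | Inr i \<Rightarrow> (\<lambda>\<omega>. if B i \<omega> then 1 else 0))
           (Inl ` {1..N} \<union> Inr ` {1..N1})"
    and Y0: "\<And>i. i \<in> {1..N} \<Longrightarrow> integrable M0 (Y i)"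
      "\<And>i. i \<in> {1..N} \<Longrightarrow> integrable M0 (\<lambda>\<omega>. (Y i \<omega>)\<^sup>2)"
      "\<And>i. i \<in> {1..N} \<Longrightarrow> 0 < prob_space.variance M0 (Y i)"
    and Y1: "\<And>i. i \<in> {1..N} \<Longrightarrow> integrable M1 (Y i)"
    and B1: "\<And>i. i \<in> {1..N1} \<Longrightarrow> (\<lambda>\<omega>. if B i \<omega> then 1 else 0 :: real) \<in> borel_measurable M1"
  defines "L0 \<equiv> (\<lambda>\<omega>. ((\<Sum>i\<in>{1..N1}. w i * (Y i \<omega> + (if B i \<omega> then Delta i else 0)))
                        + (\<Sum>i\<in>{N1+1..N}. w i * Y i \<omega>)) / (\<Sum>i\<in>{1..N}. w i))"
    and "L1 \<equiv> (\<lambda>\<omega>. ((\<Sum>i\<in>{1..N1}. w i * (Y i \<omega> - (if B i \<omega> then Delta i else 0)))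
                        + (\<Sum>i\<in>{N1+1..N}. w i * Y i \<omega>)) / (\<Sum>i\<in>{1..N}. w i))"
  shows "deflection M0 M1 L0 L1 = 0 \<longleftrightarrow>
         (\<Sum>i\<in>{1..N}. w i * ((\<integral>\<omega>. Y i \<omega> \<partial>M1) - (\<integral>\<omega>. Y i \<omega> \<partial>M0)))
           = (\<Sum>i\<in>{1..N1}. w i * Delta i * (prob_space.prob M0 {\<omega> \<in> space M0. B i \<omega>}
                                             + prob_space.prob M1 {\<omega> \<in> space M1. B i \<omega>}))"
proof -
  interpret M0: prob_space M0 by fact
  interpret M1: prob_space M1 by fact
  define I where "I = Inl ` {1..N} \<union> Inr ` {1..N1}"
  define V where "V = (\<lambda>j. case j of Inl i \<Rightarrow> Y i | Inr i \<Rightarrow> (\<lambda>\<omega>. if B i \<omega> then 1 else 0 :: real))"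
  define W where "W = (\<Sum>i\<in>{1..N}. w i)"
  define c where "c d j = (case j of Inl i \<Rightarrow> w i / W | Inr i \<Rightarrow> d * w i * Delta i / W)" for d :: real and j
  define p0 where "p0 i = M0.prob {\<omega> \<in> space M0. B i \<omega>}" for i
  define p1 where "p1 i = M1.prob {\<omega> \<in> space M1. B i \<omega>}" for i
  have "0 < W"
    unfolding W_def using assms(4) w by (intro sum_pos) auto
  have "L0 \<omega> = (\<Sum>j\<in>I. c 1 j * V j \<omega>)" for \<omega>
    unfolding L0_def W_def[symmetric] I_def V_def c_def
    by (rule attacked_statistic_linear_combination[OF assms(3),
          where R="\<lambda>i \<omega>. Y i \<omega> + (if B i \<omega> then Delta i else 0)"]) simp
  moreover have "L1 \<omega> = (\<Sum>j\<in>I. c (-1) j * V j \<omega>)" for \<omega>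
    unfolding L1_def W_def[symmetric] I_def V_def c_def
    by (rule attacked_statistic_linear_combination[OF assms(3),
          where R="\<lambda>i \<omega>. Y i \<omega> - (if B i \<omega> then Delta i else 0)"]) simp
  ultimately have L: "L0 = (\<lambda>\<omega>. \<Sum>j\<in>I. c 1 j * V j \<omega>)" "L1 = (\<lambda>\<omega>. \<Sum>j\<in>I. c (-1) j * V j \<omega>)"
    by auto
  have ind0: "M0.indep_vars (\<lambda>_. borel) V I"
    using ind unfolding V_def I_def .
  have V_Inl: "V (Inl i) = Y i" and V_Inr: "V (Inr i) = (\<lambda>\<omega>. if B i \<omega> then 1 else 0)" for i
    by (simp_all add: V_def)
  have B0: "(\<lambda>\<omega>. if B i \<omega> then 1 else 0 :: real) \<in> borel_measurable M0" if "i \<in> {1..N1}" for i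
    using ind0 that unfolding M0.indep_vars_def2 I_def V_Inr[symmetric] by blast
  note ind_B0 = M0.indicator_moments[OF B0, folded V_Inr p0_def]
  note ind_B1 = M1.indicator_moments[OF B1, folded V_Inr p1_def]
  have "deflection M0 M1 L0 L1 = 0
      \<longleftrightarrow> (\<Sum>j\<in>I. c (-1) j * M1.expectation (V j)) = (\<Sum>j\<in>I. c 1 j * M0.expectation (V j))"
    unfolding L
  proof (rule deflection_linear_statistic_eq_0_iff[where k = "Inl 1", OF assms(1) _ ind0])
    have one: "1 \<in> {1..N}"
      using assms(4) by simp
    then show "Inl 1 \<in> I" "c 1 (Inl 1) \<noteq> 0" "0 < M0.variance (V (Inl 1))"
      using w[OF one] Y0(3)[OF one] \<open>0 < W\<close> by (simp_all add: I_def c_def V_Inl)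
    show "integrable M0 (V j)" "integrable M0 (\<lambda>\<omega>. (V j \<omega>)\<^sup>2)" "integrable M1 (V j)"
      if "j \<in> I" for j
      using that Y0 Y1 ind_B0 ind_B1 unfolding I_def by (auto simp: V_Inl V_Inr)
  qed (simp add: I_def)
  also have "(\<Sum>j\<in>I. c (-1) j * M1.expectation (V j))
      = ((\<Sum>i\<in>{1..N}. w i * M1.expectation (Y i)) - (\<Sum>i\<in>{1..N1}. w i * Delta i * p1 i)) / W"
    unfolding I_def
    by (simp add: sum_Inl_Inr_image c_def V_Inl ind_B1 diff_divide_distrib sum_divide_distrib sum_negf)
  also have "(\<Sum>j\<in>I. c 1 j * M0.expectation (V j))
      = ((\<Sum>i\<in>{1..N}. w i * M0.expectation (Y i)) + (\<Sum>i\<in>{1..N1}. w i * Delta i * p0 i)) / W"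
    unfolding I_def
    by (simp add: sum_Inl_Inr_image c_def V_Inl ind_B0 add_divide_distrib sum_divide_distrib)
  finally show ?thesis
    using \<open>0 < W\<close>
    by (simp add: p0_def p1_def divide_cancel_right right_diff_distrib distrib_left sum.distrib sum_subtractf)
       arith
qed

theorem lemma1:
  fixes M0 M1 :: "'a measure"
    and N N1 dof :: nat
    and Y :: "nat \<Rightarrow> 'a \<Rightarrow> real"
    and B :: "nat \<Rightarrow> 'a \<Rightarrow> bool"
    and sigma eta P Delta w :: "nat \<Rightarrow> real"
  assumes "prob_space M0" and "prob_space M1"
    and "N1 \<le> N" and "1 \<le> N" and "0 < dof"
    and "\<And>i. i \<in> {1..N} \<Longrightarrow> sigma i > 0"
    and "\<And>i. i \<in> {1..N} \<Longrightarrow> eta i \<ge> 0"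
    and "\<And>i. i \<in> {1..N} \<Longrightarrow> w i > 0"
    and "\<And>i. i \<in> {1..N1} \<Longrightarrow> 0 \<le> P i \<and> P i \<le> 1"
    and "\<And>i. i \<in> {1..N} \<Longrightarrow>
           distributed M0 lborel (\<lambda>\<omega>. Y i \<omega> / (sigma i)\<^sup>2) (\<lambda>x. ennreal (chi2_density dof x))"
    and "\<And>i. i \<in> {1..N} \<Longrightarrow>
           distributed M1 lborel (\<lambda>\<omega>. Y i \<omega> / (sigma i)\<^sup>2) (\<lambda>x. ennreal (ncchi2_density dof (eta i) x))"
    and "\<And>i. i \<in> {1..N1} \<Longrightarrow> prob_space.prob M0 {\<omega> \<in> space M0. B i \<omega>} = P i"
    and "\<And>i. i \<in> {1..N1} \<Longrightarrow> prob_space.prob M1 {\<omega> \<in> space M1. B i \<omega>} = P i"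
    and "prob_space.indep_vars M0 (\<lambda>_. borel)
           (\<lambda>j. case j of Inl i \<Rightarrow> Y i | Inr i \<Rightarrow> (\<lambda>\<omega>. if B i \<omega> then 1 else 0))
           (Inl ` {1..N} \<union> Inr ` {1..N1})"
    and "prob_space.indep_vars M1 (\<lambda>_. borel)
           (\<lambda>j. case j of Inl i \<Rightarrow> Y i | Inr i \<Rightarrow> (\<lambda>\<omega>. if B i \<omega> then 1 else 0))
           (Inl ` {1..N} \<union> Inr ` {1..N1})"
  defines "L0 \<equiv> (\<lambda>\<omega>. ((\<Sum>i\<in>{1..N1}. w i * (Y i \<omega> + (if B i \<omega> then Delta i else 0)))
                        + (\<Sum>i\<in>{N1+1..N}. w i * Y i \<omega>)) / (\<Sum>i\<in>{1..N}. w i))"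
    and "L1 \<equiv> (\<lambda>\<omega>. ((\<Sum>i\<in>{1..N1}. w i * (Y i \<omega> - (if B i \<omega> then Delta i else 0)))
                        + (\<Sum>i\<in>{N1+1..N}. w i * Y i \<omega>)) / (\<Sum>i\<in>{1..N}. w i))"
  shows "deflection M0 M1 L0 L1 = 0 \<longleftrightarrow>
         (\<Sum>i\<in>{1..N1}. w i * (2 * P i * Delta i - eta i * (sigma i)\<^sup>2))
           = (\<Sum>i\<in>{N1+1..N}. w i * eta i * (sigma i)\<^sup>2)"
proof -
  interpret M0: prob_space M0 by fact
  interpret M1: prob_space M1 by fact
  have Y0: "integrable M0 (Y i)" "M0.expectation (Y i) = (sigma i)\<^sup>2 * real dof"
      "integrable M0 (\<lambda>\<omega>. (Y i \<omega>)\<^sup>2)" "0 < M0.variance (Y i)"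
    if "i \<in> {1..N}" for i
    using M0.scaled_chi2_distributed_moments[OF assms(10)[OF that] assms(6)[OF that] assms(5)]
      assms(5) assms(6)[OF that] by simp_all
  have Y1: "integrable M1 (Y i)" "M1.expectation (Y i) = (sigma i)\<^sup>2 * (real dof + eta i)"
    if "i \<in> {1..N}" for i
    using M1.scaled_ncchi2_distributed_mean[OF assms(11) assms(6) assms(5) assms(7)] that by auto
  have B1: "(\<lambda>\<omega>. if B i \<omega> then 1 else 0 :: real) \<in> borel_measurable M1" if "i \<in> {1..N1}" for i
    using assms(15) that unfolding M1.indep_vars_def2 by force
  have "deflection M0 M1 L0 L1 = 0 \<longleftrightarrow>
      (\<Sum>i\<in>{1..N}. w i * (M1.expectation (Y i) - M0.expectation (Y i)))
        = (\<Sum>i\<in>{1..N1}. w i * Delta i * (M0.prob {\<omega> \<in> space M0. B i \<omega>} + M1.prob {\<omega> \<in> space M1. B i \<omega>}))"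
    unfolding L0_def L1_def
    by (rule deflection_attacked_statistic_eq_0_iff[OF assms(1-4,8,14) Y0(1,3,4) Y1(1) B1])
  also have "(\<Sum>i\<in>{1..N}. w i * (M1.expectation (Y i) - M0.expectation (Y i)))
      = (\<Sum>i\<in>{1..N}. w i * eta i * (sigma i)\<^sup>2)"
    by (intro sum.cong) (simp_all add: Y0 Y1 algebra_simps)
  also have "(\<Sum>i\<in>{1..N1}. w i * Delta i * (M0.prob {\<omega> \<in> space M0. B i \<omega>} + M1.prob {\<omega> \<in> space M1. B i \<omega>}))
      = (\<Sum>i\<in>{1..N1}. 2 * (w i * P i * Delta i))"
    using assms(12,13) by (intro sum.cong) simp_all
  also have "(\<Sum>i\<in>{1..N}. w i * eta i * (sigma i)\<^sup>2)
      = (\<Sum>i\<in>{1..N1}. w i * eta i * (sigma i)\<^sup>2) + (\<Sum>i\<in>{N1+1..N}. w i * eta i * (sigma i)\<^sup>2)"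
    using sum.ub_add_nat[of 1 N1 "\<lambda>i. w i * eta i * (sigma i)\<^sup>2" "N - N1"] assms(3) by simp
  finally show ?thesis
    by (simp add: right_diff_distrib sum_subtractf sum_distrib_left[symmetric] algebra_simps) arith
qed

end
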